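(* Consider single-shot measurement learning (SSML) as described in the context, with unchanged halting rule (halt when the recorded consecutive-success counter reaches $M_H$), where the recorded labels are corrupted according to either the binary-symmetric noise model or the false-negative noise model with parameter $q>0$. Then the halting time $T$ satisfies $$\mathbb{E}[T]\ge\mathbb{E}\big[X_{M_H}(1-q)\big]=\frac{1-(1-q)^{M_H}}{q(1-q)^{M_H}}.$$ In particular, for $qM_H\gg1$, $\mathbb{E}[T]\gtrsim\frac{1}{q}e^{qM_H}$.
   Context: Let $d\ge2$, $\mathcal{H}=\mathbb{C}^d$, $|\psi_\tau\rangle$ an unknown pure state available in arbitrarily many copies, $\{\hat U(\mathbf{p}):\mathbf{p}\in\mathcal{P}\subset\mathbb{R}^m\}$ a family of unitaries, $|f\rangle$ a fixed fiducial state, $F(\mathbf{p})=|\langle f|\hat U(\mathbf{p})|\psi_\tau\rangle|^2$. SSML with $\alpha,\beta>0$ and threshold $M_H\in\mathbb{N}$: at step $n$ a fresh copy is transformed by $\hat U(\mathbf{p}^{(n)})$ and measured with $\{|f\rangle\langle f|,\mathbb{1}-|f\rangle\langle f|\}$, producing a true outcome $y_n\in\{s,u\}$ with $\mathbb{P}(y_n=s\mid\text{past})=F(\mathbf{p}^{(n)})$. The controller only sees a recorded label $m_n\in\{s,u\}$. If $m_n=s$, the counter is incremented, $M_S^{(n)}=M_S^{(n-1)}+1$, and $\mathbf{p}^{(n+1)}=\mathbf{p}^{(n)}$; if $m_n=u$, $M_S^{(n)}=0$ and $\mathbf{p}^{(n+1)}=\mathbf{p}^{(n)}+\alpha(M_S^{(n-1)}+1)^{-\beta}\mathbf{r}_n$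 with $\mathbf{r}_n$ a random direction. The halting time is $T=\inf\{n\ge1:M_S^{(n)}=M_H\}$. Binary-symmetric noise (parameter $q\in(0,1/2)$): $\mathbb{P}(m_n\ne y_n)=q$, independently across steps and of all other randomness conditionally on the true label. False-negative noise (parameter $q\in(0,1)$): $\mathbb{P}(m_n=u\mid y_n=s)=q$, $\mathbb{P}(m_n=s\mid y_n=s)=1-q$, $\mathbb{P}(m_n=u\mid y_n=u)=1$, independently across steps. For $p\in(0,1)$ and $k\in\mathbb{N}$, $X_k(p)$ is the waiting time until the first occurrence of $k$ consecutive successes in an i.i.d. Bernoulli$(p)$ sequence. *)

theory Defs
  imports "HOL-Probability.Probability"
begin

definition cinner :: "complex^'d \<Rightarrow> complex^'d \<Rightarrow> complex" where
  "cinner u v = (\<Sum>i\<in>UNIV. cnj (u $ i) * v $ i)"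

definition unit_cvec :: "complex^'d \<Rightarrow> bool" where
  "unit_cvec v \<longleftrightarrow> (\<Sum>i\<in>UNIV. (cmod (v $ i))\<^sup>2) = 1"

definition unitary_cmat :: "complex^'d^'d \<Rightarrow> bool" where
  "unitary_cmat A \<longleftrightarrow>
     (\<forall>i j. (\<Sum>k\<in>UNIV. A $ i $ k * cnj (A $ j $ k)) = (if i = j then 1 else 0))"

definition fidelity :: "complex^'d \<Rightarrow> ('p \<Rightarrow> complex^'d^'d) \<Rightarrow> complex^'d \<Rightarrow> 'p \<Rightarrow> real" where
  "fidelity f U \<psi> p = (cmod (cinner f (U p *v \<psi>)))\<^sup>2"

text \<open>Noise models acting on the true label (True = s, False = u).\<close>
datatype noise_model = BSC | FN

definition noise_pmf :: "noise_model \<Rightarrow> real \<Rightarrow> bool \<Rightarrow> bool pmf" where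
  "noise_pmf nm q y = (case nm of
      BSC \<Rightarrow> map_pmf (\<lambda>flip. if flip then \<not> y else y) (bernoulli_pmf q)
    | FN \<Rightarrow> (if y then bernoulli_pmf (1 - q) else return_pmf False))"

definition rec_pmf :: "noise_model \<Rightarrow> real \<Rightarrow> real \<Rightarrow> bool pmf" where
  "rec_pmf nm q Fp = bind_pmf (bernoulli_pmf Fp) (noise_pmf nm q)"

text \<open>One SSML step on the state (parameter p^(n), counter M_S^(n-1)); the state
  with counter = MH is absorbing (the procedure has halted).\<close>
definition ssml_step ::
  "(real^'m \<Rightarrow> real) \<Rightarrow> noise_model \<Rightarrow> real \<Rightarrow> real \<Rightarrow> real \<Rightarrow> (real^'m) measure \<Rightarrow> nat
   \<Rightarrow> (real^'m) \<times> nat \<Rightarrow> ((real^'m) \<times> nat) measure" where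
  "ssml_step F nm q \<alpha> \<beta> R MH s = (case s of (p, c) \<Rightarrow>
     if c = MH then return borel (p, c)
     else bind (measure_pmf (rec_pmf nm q (F p)))
            (\<lambda>m. if m then return borel (p, Suc c)
                 else distr R borel (\<lambda>r. (p + (\<alpha> * real (Suc c) powr (- \<beta>)) *\<^sub>R r, 0))))"

primrec ssml_dist ::
  "(real^'m \<Rightarrow> real) \<Rightarrow> noise_model \<Rightarrow> real \<Rightarrow> real \<Rightarrow> real \<Rightarrow> (real^'m) measure \<Rightarrow> nat
   \<Rightarrow> real^'m \<Rightarrow> nat \<Rightarrow> ((real^'m) \<times> nat) measure" where
  "ssml_dist F nm q \<alpha> \<beta> R MH p0 0 = return borel (p0, 0)"
| "ssml_dist F nm q \<alpha> \<beta> R MH p0 (Suc n) =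
     bind (ssml_dist F nm q \<alpha> \<beta> R MH p0 n) (ssml_step F nm q \<alpha> \<beta> R MH)"

text \<open>E[T] = sum over n >= 0 of P(T > n); T > n iff the counter has not reached MH
  after n steps.\<close>
definition ssml_ET ::
  "(real^'m \<Rightarrow> real) \<Rightarrow> noise_model \<Rightarrow> real \<Rightarrow> real \<Rightarrow> real \<Rightarrow> (real^'m) measure \<Rightarrow> nat
   \<Rightarrow> real^'m \<Rightarrow> ennreal" where
  "ssml_ET F nm q \<alpha> \<beta> R MH p0 =
     (\<Sum>n. emeasure (ssml_dist F nm q \<alpha> \<beta> R MH p0 n) {s. snd s \<noteq> MH})"

text \<open>X_k(p): waiting time for k consecutive successes in i.i.d. Bernoulli(p) trials,
  via the (absorbed) run-length counter.\<close>
primrec run_dist :: "nat \<Rightarrow> real \<Rightarrow> nat \<Rightarrow> nat pmf" where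
  "run_dist k p 0 = return_pmf 0"
| "run_dist k p (Suc n) = bind_pmf (run_dist k p n)
     (\<lambda>c. if c = k then return_pmf c
          else map_pmf (\<lambda>b. if b then Suc c else 0) (bernoulli_pmf p))"

definition expected_wait :: "nat \<Rightarrow> real \<Rightarrow> ennreal" where
  "expected_wait k p = (\<Sum>n. ennreal (measure_pmf.prob (run_dist k p n) {c. c \<noteq> k}))"

end

theory Submission
  imports Defs
begin

text \<open>Whatever the fidelity landscape, from a state with counter c < M_H the recorded label is a
  success with probability at most 1 - q, and a failure resets the counter to 0. Hence, by induction
  on the number of steps, the counter of SSML is stochastically dominated by the run length of
  i.i.d. Bernoulli(1 - q) trials, and summing tail probabilities gives E[T] \<ge> E[X_{M_H}(1 - q)].
  The closed form of the latter comes from the potential h(c) = (p^{-k} - p^{-c}) / (1 - p), the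
  expected remaining waiting time from run length c, which decreases in expectation by exactly one
  per step until absorption.\<close>

section \<open>Waiting time for a run of successes\<close>

lemma set_pmf_run_dist: "set_pmf (run_dist k p n) \<subseteq> {..k}"
proof (induction n)
  case (Suc n)
  then show ?case
    by (force split: if_splits simp: Suc_le_eq le_less)
qed simp

lemma AE_run_dist_le: "AE c in measure_pmf (run_dist k p n). c \<le> k"
  using set_pmf_run_dist by (auto simp: AE_measure_pmf_iff)

lemma integrable_run_dist: "integrable (measure_pmf (run_dist k p n)) (g :: nat \<Rightarrow> real)"
  by (rule integrable_measure_pmf_finite) (meson finite_atMost finite_subset set_pmf_run_dist)

lemma expectation_run_dist_Suc:
  fixes g :: "nat \<Rightarrow> real"
  assumes p: "0 \<le> p" "p \<le> 1" and g: "\<And>c. \<bar>g c\<bar> \<le> B"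
  shows "measure_pmf.expectation (run_dist k p (Suc n)) g =
    measure_pmf.expectation (run_dist k p n)
      (\<lambda>c. if c = k then g k else p * g (Suc c) + (1 - p) * g 0)"
proof -
  have "measure_pmf.expectation (run_dist k p (Suc n)) g =
     (\<integral>c. measure_pmf.expectation (if c = k then return_pmf c
          else map_pmf (\<lambda>b. if b then Suc c else 0) (bernoulli_pmf p)) g \<partial>measure_pmf (run_dist k p n))"
    unfolding run_dist.simps measure_pmf_bind
    by (rule integral_bind[where K = "count_space UNIV" and B = B and B' = 1])
       (auto simp: g space_subprob_algebra prob_space_imp_subprob_space
          measure_pmf.prob_space_axioms measure_pmf.emeasure_space_1
          intro: prob_space.finite_measure)
  also have "\<dots> = measure_pmf.expectation (run_dist k p n)
      (\<lambda>c. if c = k then g k else p * g (Suc c) + (1 - p) * g 0)"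
    using p by (intro Bochner_Integration.integral_cong) (auto simp: integral_map_pmf algebra_simps)
  finally show ?thesis .
qed

lemma prob_run_dist_Suc_ge:
  assumes p: "0 \<le> p" "p \<le> 1" and j: "1 \<le> j" "j \<le> k"
  shows "measure_pmf.prob (run_dist k p (Suc n)) {c. j \<le> c} =
    (1 - p) * measure_pmf.prob (run_dist k p n) {c. k \<le> c}
      + p * measure_pmf.prob (run_dist k p n) {c. j - 1 \<le> c}"
proof -
  have "measure_pmf.prob (run_dist k p (Suc n)) {c. j \<le> c} =
      measure_pmf.expectation (run_dist k p (Suc n)) (indicator {c. j \<le> c})"
    by simp
  also have "\<dots> = measure_pmf.expectation (run_dist k p n)
     (\<lambda>c. if c = k then indicator {c. j \<le> c} k
          else p * indicator {c. j \<le> c} (Suc c) + (1 - p) * indicator {c. j \<le> c} 0)"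
    by (rule expectation_run_dist_Suc[OF p, where B = 1]) (simp split: split_indicator)
  also have "\<dots> = measure_pmf.expectation (run_dist k p n)
     (\<lambda>c. (1 - p) * indicator {c. k \<le> c} c + p * indicator {c. j - 1 \<le> c} c)"
    using AE_run_dist_le[of k p n] j by (intro integral_cong_AE) (auto split: split_indicator)
  also have "\<dots> = (1 - p) * measure_pmf.prob (run_dist k p n) {c. k \<le> c}
      + p * measure_pmf.prob (run_dist k p n) {c. j - 1 \<le> c}"
    by (subst Bochner_Integration.integral_add) (auto intro: integrable_run_dist)
  finally show ?thesis .
qed

lemma tail_le_by_recursion:
  fixes G H :: "nat \<Rightarrow> nat \<Rightarrow> real"
  assumes p: "0 \<le> p" "p \<le> 1"
    and init: "\<And>j. j \<le> k \<Longrightarrow> G 0 j \<le> H 0 j"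
    and zero: "\<And>n. G (Suc n) 0 \<le> H (Suc n) 0"
    and G_step: "\<And>n j. 1 \<le> j \<Longrightarrow> j \<le> k \<Longrightarrow> G (Suc n) j \<le> (1 - p) * G n k + p * G n (j - 1)"
    and H_step: "\<And>n j. 1 \<le> j \<Longrightarrow> j \<le> k \<Longrightarrow> H (Suc n) j = (1 - p) * H n k + p * H n (j - 1)"
  shows "j \<le> k \<Longrightarrow> G n j \<le> H n j"
proof (induction n arbitrary: j)
  case 0
  then show ?case
    by (rule init)
next
  case (Suc n)
  show ?case
  proof (cases "j = 0")
    case True
    then show ?thesis
      using zero by simp
  next
    case False
    then have "1 \<le> j"
      by simp
    then have "G (Suc n) j \<le> (1 - p) * G n k + p * G n (j - 1)"
      using G_step Suc.prems by blast
    also have "\<dots> \<le> (1 - p) * H n k + p * H n (j - 1)"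
      using Suc.IH Suc.prems p by (intro add_mono mult_left_mono) auto
    also have "\<dots> = H (Suc n) j"
      using H_step \<open>1 \<le> j\<close> Suc.prems by simp
    finally show ?thesis .
  qed
qed

definition run_potential :: "nat \<Rightarrow> real \<Rightarrow> nat \<Rightarrow> real" where
  "run_potential k p c = (1 / p ^ k - 1 / p ^ min c k) / (1 - p)"

lemma run_potential_target [simp]: "run_potential k p k = 0"
  by (simp add: run_potential_def)

lemma run_potential_bounds:
  assumes "0 < p" "p < 1"
  shows "0 \<le> run_potential k p c" "run_potential k p c \<le> run_potential k p 0"
proof -
  have "p ^ min c k \<le> 1" "p ^ k \<le> p ^ min c k" "0 < p ^ k"
    using assms by (auto simp: power_le_one intro: power_decreasing)
  then have "1 \<le> 1 / p ^ min c k" "1 / p ^ min c k \<le> 1 / p ^ k"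
    by (auto simp: field_simps)
  then show "0 \<le> run_potential k p c" "run_potential k p c \<le> run_potential k p 0"
    using assms by (auto simp: run_potential_def divide_right_mono)
qed

lemma run_potential_step:
  assumes "0 < p" "p < 1" and "c < k"
  shows "p * run_potential k p (Suc c) + (1 - p) * run_potential k p 0 = run_potential k p c - 1"
proof -
  have "min (Suc c) k = Suc c" "min c k = c"
    using \<open>c < k\<close> by auto
  then have h: "run_potential k p (Suc c) = (1 / p ^ k - (1 / p ^ c) / p) / (1 - p)"
      "run_potential k p c = (1 / p ^ k - 1 / p ^ c) / (1 - p)"
      "run_potential k p 0 = (1 / p ^ k - 1) / (1 - p)"
    by (simp_all add: run_potential_def)
  have "p * ((A - B / p) / (1 - p)) + (1 - p) * ((A - 1) / (1 - p)) = (A - B) / (1 - p) - 1"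
    for A B :: real
  proof -
    have "p * ((A - B / p) / (1 - p)) = (p * A - B) / (1 - p)"
      using assms by (simp add: right_diff_distrib)
    also have "\<dots> = (A - B) / (1 - p) - A"
      using assms by (simp add: field_simps)
    finally show ?thesis
      using assms by simp
  qed
  then show ?thesis
    unfolding h .
qed

lemma expectation_run_potential_Suc:
  assumes "0 < p" "p < 1"
  shows "measure_pmf.expectation (run_dist k p (Suc n)) (run_potential k p) =
    measure_pmf.expectation (run_dist k p n) (run_potential k p)
      - measure_pmf.prob (run_dist k p n) {c. c \<noteq> k}"
proof -
  let ?h = "run_potential k p"
  have "measure_pmf.expectation (run_dist k p (Suc n)) ?h = measure_pmf.expectation (run_dist k p n)
      (\<lambda>c. if c = k then ?h k else p * ?h (Suc c) + (1 - p) * ?h 0)"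
    using assms run_potential_bounds[OF assms]
    by (intro expectation_run_dist_Suc[where B = "?h 0"]) auto
  also have "\<dots> = measure_pmf.expectation (run_dist k p n) (\<lambda>c. ?h c - indicator {c. c \<noteq> k} c)"
    using AE_run_dist_le[of k p n] run_potential_step[OF assms]
    by (intro integral_cong_AE) auto
  also have "\<dots> = measure_pmf.expectation (run_dist k p n) ?h
      - measure_pmf.prob (run_dist k p n) {c. c \<noteq> k}"
    by (subst Bochner_Integration.integral_diff) (auto intro: integrable_run_dist)
  finally show ?thesis .
qed

lemma telescoping_sums:
  fixes e t :: "nat \<Rightarrow> real"
  assumes step: "\<And>n. e (Suc n) = e n - t n"
    and e_nonneg: "\<And>n. 0 \<le> e n" and t_nonneg: "\<And>n. 0 \<le> t n"
    and e_le: "\<And>n. e n \<le> C * t n"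
  shows "t sums e 0"
proof -
  have partial: "(\<Sum>i<n. t i) = e 0 - e n" for n
    by (induction n) (simp_all add: step)
  have "summable t"
    by (rule summableI_nonneg_bounded[where x = "e 0"]) (auto simp: t_nonneg partial e_nonneg)
  then have "(\<lambda>n. C * t n) \<longlonglongrightarrow> 0"
    by (auto intro: tendsto_mult_right_zero summable_LIMSEQ_zero)
  then have "e \<longlonglongrightarrow> 0"
    by (rule tendsto_sandwich[rotated 2, OF tendsto_const]) (auto simp: e_nonneg e_le)
  then have "(\<lambda>n. e 0 - e n) \<longlonglongrightarrow> e 0 - 0"
    by (intro tendsto_intros)
  then show ?thesis
    unfolding sums_def partial by simp
qed

lemma expected_wait_eq:
  assumes "0 < p" "p < 1"
  shows "expected_wait k p = ennreal ((1 - p ^ k) / ((1 - p) * p ^ k))"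
proof -
  let ?h = "run_potential k p"
  define t where "t n = measure_pmf.prob (run_dist k p n) {c. c \<noteq> k}" for n
  have t_nonneg: "0 \<le> t n" for n
    by (simp add: t_def)
  have "t sums measure_pmf.expectation (run_dist k p 0) ?h"
  proof (rule telescoping_sums[where C = "?h 0"])
    fix n
    show "measure_pmf.expectation (run_dist k p (Suc n)) ?h
        = measure_pmf.expectation (run_dist k p n) ?h - t n"
      unfolding t_def by (rule expectation_run_potential_Suc[OF assms])
    show "0 \<le> measure_pmf.expectation (run_dist k p n) ?h"
      using run_potential_bounds[OF assms] by (intro integral_nonneg_AE) auto
    show "0 \<le> t n"
      by (rule t_nonneg)
    have "measure_pmf.expectation (run_dist k p n) ?h
        \<le> measure_pmf.expectation (run_dist k p n) (\<lambda>c. ?h 0 * indicator {c. c \<noteq> k} c)"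
      using AE_run_dist_le[of k p n] run_potential_bounds[OF assms]
      by (intro integral_mono_AE integrable_run_dist) (auto split: split_indicator)
    then show "measure_pmf.expectation (run_dist k p n) ?h \<le> ?h 0 * t n"
      by (simp add: t_def)
  qed
  then have "t sums ?h 0"
    by simp
  then have "expected_wait k p = ennreal (?h 0)"
    unfolding expected_wait_def t_def[symmetric] by (rule suminf_ennreal_eq[OF t_nonneg])
  also have "?h 0 = (1 - p ^ k) / ((1 - p) * p ^ k)"
    using assms by (simp add: run_potential_def field_simps)
  finally show ?thesis .
qed

lemma exp_mult_minus_one_div_le:
  fixes q :: real
  assumes "0 < q" "q < 1"
  shows "(exp (q * real M) - 1) / q \<le> (1 - (1 - q) ^ M) / (q * (1 - q) ^ M)"
proof -
  have pos: "0 < (1 - q) ^ M"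
    using assms by simp
  have "(1 - q) ^ M \<le> exp (- q) ^ M"
    using exp_ge_add_one_self[of "- q"] assms by (intro power_mono) auto
  also have "\<dots> = exp (- (q * real M))"
    by (simp add: exp_of_nat_mult[symmetric] mult.commute)
  finally have "exp (q * real M) \<le> 1 / (1 - q) ^ M"
    using pos by (simp add: exp_minus field_simps)
  then have "(exp (q * real M) - 1) / q \<le> (1 / (1 - q) ^ M - 1) / q"
    using assms by (intro divide_right_mono) auto
  also have "\<dots> = (1 - (1 - q) ^ M) / (q * (1 - q) ^ M)"
    using pos assms by (simp add: field_simps)
  finally show ?thesis .
qed

definition rec_success :: "noise_model \<Rightarrow> real \<Rightarrow> real \<Rightarrow> real" where
  "rec_success nm q x = pmf (rec_pmf nm q x) True"

lemma bernoulli_pmf_clamp: "bernoulli_pmf x = bernoulli_pmf (max 0 (min 1 x))"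
  by (rule pmf_eqI) (simp add: bernoulli_pmf.rep_eq split: split_max split_min)

lemma rec_success_eq:
  "rec_success nm q x = max 0 (min 1 x) * pmf (noise_pmf nm q True) True
     + (1 - max 0 (min 1 x)) * pmf (noise_pmf nm q False) True"
  unfolding rec_success_def rec_pmf_def pmf_bind bernoulli_pmf_clamp[of x] by simp

lemma borel_measurable_rec_success:
  assumes [measurable]: "F \<in> borel_measurable M"
  shows "(\<lambda>x. rec_success nm q (F x)) \<in> borel_measurable M"
  unfolding rec_success_eq by measurable

lemma pmf_bind_le_const:
  assumes "\<And>x. pmf (f x) y \<le> c"
  shows "pmf (bind_pmf N f) y \<le> c"
  unfolding pmf_bind
  by (rule measure_pmf.integral_le_const)
     (auto intro: measure_pmf.integrable_const_bound[where B = 1] simp: pmf_le_1 assms)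

lemma pmf_noise_pmf_True_le:
  assumes "(nm = BSC \<and> 0 < q \<and> q < 1/2) \<or> (nm = FN \<and> 0 < q \<and> q < 1)"
  shows "pmf (noise_pmf nm q y) True \<le> 1 - q"
proof (cases nm)
  case BSC
  have "{b. \<not> b} = {False}" "{b. b} = {True}"
    by auto
  with BSC assms show ?thesis
    by (cases y) (auto simp: noise_pmf_def pmf_map vimage_def measure_pmf_single)
next
  case FN
  with assms show ?thesis
    by (auto simp: noise_pmf_def)
qed

lemma rec_success_le:
  assumes "(nm = BSC \<and> 0 < q \<and> q < 1/2) \<or> (nm = FN \<and> 0 < q \<and> q < 1)"
  shows "rec_success nm q x \<le> 1 - q"
  unfolding rec_success_def rec_pmf_def
  by (intro pmf_bind_le_const pmf_noise_pmf_True_le[OF assms])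

section \<open>The SSML chain\<close>

lemma borel_measurable_fidelity:
  fixes f \<psi> :: "complex^'d" and U :: "real^'m \<Rightarrow> complex^'d^'d"
  assumes "U \<in> borel_measurable borel"
  shows "fidelity f U \<psi> \<in> borel_measurable borel"
proof -
  have "(\<lambda>A :: complex^'d^'d. (cmod (cinner f (A *v \<psi>)))\<^sup>2) \<in> borel_measurable borel"
    unfolding cinner_def matrix_vector_mult_def
    by (intro borel_measurable_continuous_onI) (simp, intro continuous_intros)
  from measurable_compose[OF assms this] show ?thesis
    by (simp add: fidelity_def[abs_def])
qed

lemma measurable_snd_count_space:
  "(snd :: 'a::topological_space \<times> nat \<Rightarrow> nat) \<in> borel \<rightarrow>\<^sub>M count_space UNIV"
proof -
  have "snd -` {a} = (UNIV :: 'a set) \<times> {a}" for a :: nat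
    by auto
  moreover have "closed ((UNIV :: 'a set) \<times> {a :: nat})" for a
    by (intro closed_Times) auto
  ultimately show ?thesis
    by (auto simp: measurable_count_space_eq2_countable)
qed

lemma sets_Collect_snd_ge: "{s :: 'a::topological_space \<times> nat. j \<le> snd s} \<in> sets borel"
proof -
  have "snd -` {j..} \<inter> space borel \<in> sets (borel :: ('a \<times> nat) measure)"
    by (rule measurable_sets[OF measurable_snd_count_space]) simp
  moreover have "snd -` {j..} \<inter> space borel = {s :: 'a \<times> nat. j \<le> snd s}"
    by auto
  ultimately show ?thesis
    by simp
qed

lemma measure_pmf_prob_algebra: "measure_pmf M \<in> space (prob_algebra (count_space UNIV))"
  by (simp add: space_prob_algebra measure_pmf.prob_space_axioms)

context
  fixes F :: "real^'m \<Rightarrow> real" and nm :: noise_model and q \<alpha> \<beta> :: real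
    and R :: "(real^'m) measure" and MH :: nat
  assumes F_measurable: "F \<in> borel_measurable borel"
    and R_prob: "prob_space R" and sets_R: "sets R = sets borel"
begin

definition ssml_jump :: "real^'m \<Rightarrow> nat \<Rightarrow> real^'m \<Rightarrow> (real^'m) \<times> nat" where
  "ssml_jump p c r = (p + (\<alpha> * real (Suc c) powr (- \<beta>)) *\<^sub>R r, 0)"

lemma ssml_step_running:
  assumes "c \<noteq> MH"
  shows "ssml_step F nm q \<alpha> \<beta> R MH (p, c) =
     measure_pmf (rec_pmf nm q (F p)) \<bind>
       (\<lambda>m. if m then return borel (p, Suc c) else distr R borel (ssml_jump p c))"
  using assms unfolding ssml_step_def ssml_jump_def by simp

lemma measurable_ssml_jump: "ssml_jump p c \<in> R \<rightarrow>\<^sub>M borel"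
proof -
  have "ssml_jump p c \<in> borel_measurable borel"
    unfolding ssml_jump_def by (intro borel_measurable_continuous_onI continuous_intros)
  then show ?thesis
    by (subst measurable_cong_sets[OF sets_R refl])
qed

lemma ssml_branch_prob_algebra:
  "(\<lambda>m. if m then return borel (p, Suc c) else distr R borel (ssml_jump p c))
     \<in> count_space UNIV \<rightarrow>\<^sub>M prob_algebra borel"
proof -
  have "prob_space (distr R borel (ssml_jump p c))"
    by (rule prob_space.prob_space_distr[OF R_prob measurable_ssml_jump])
  then show ?thesis
    by (auto simp: space_prob_algebra prob_space_return)
qed

lemma ssml_step_prob_algebra: "ssml_step F nm q \<alpha> \<beta> R MH s \<in> space (prob_algebra borel)"
proof (cases s)
  case (Pair p c)
  show ?thesis
  proof (cases "c = MH")
    case True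
    then show ?thesis
      using Pair by (simp add: ssml_step_def space_prob_algebra prob_space_return)
  next
    case False
    note bind = measure_pmf_prob_algebra ssml_branch_prob_algebra
    show ?thesis
      using Pair False prob_space_bind'[OF bind] sets_bind'[OF bind]
      by (simp add: ssml_step_running space_prob_algebra)
  qed
qed

lemma emeasure_ssml_step:
  assumes X: "X \<in> sets borel"
  shows "emeasure (ssml_step F nm q \<alpha> \<beta> R MH (p, c)) X =
    (if c = MH then indicator X (p, c)
     else ennreal (rec_success nm q (F p)) * indicator X (p, Suc c)
        + ennreal (1 - rec_success nm q (F p)) * emeasure R {r. ssml_jump p c r \<in> X})"
proof (cases "c = MH")
  case True
  then show ?thesis
    using X by (simp add: ssml_step_def)
next
  case False
  let ?N = "\<lambda>m. if m then return borel (p, Suc c) else distr R borel (ssml_jump p c)"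
  have "emeasure (ssml_step F nm q \<alpha> \<beta> R MH (p, c)) X =
      (\<integral>\<^sup>+m. emeasure (?N m) X \<partial>measure_pmf (rec_pmf nm q (F p)))"
    using False X
    by (simp add: ssml_step_running
        emeasure_bind_prob_algebra[OF measure_pmf_prob_algebra ssml_branch_prob_algebra])
  also have "\<dots> = (\<Sum>m\<in>UNIV. emeasure (?N m) X * pmf (rec_pmf nm q (F p)) m)"
    by (rule nn_integral_measure_pmf_support) auto
  also have "\<dots> = ennreal (rec_success nm q (F p)) * indicator X (p, Suc c)
        + ennreal (1 - rec_success nm q (F p)) * emeasure R {r. ssml_jump p c r \<in> X}"
    using X sets_eq_imp_space_eq[OF sets_R]
    by (cases "(p, Suc c) \<in> X")
       (simp_all add: UNIV_bool pmf_False_conv_True rec_success_def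
          emeasure_distr[OF measurable_ssml_jump X] vimage_def mult.commute)
  finally show ?thesis
    using False by simp
qed

lemma borel_measurable_emeasure_ssml_jump:
  assumes X: "X \<in> sets borel"
  shows "(\<lambda>p. emeasure R {r. ssml_jump p c r \<in> X}) \<in> borel_measurable borel"
proof -
  interpret R: prob_space R
    by (rule R_prob)
  define Q where "Q = (\<lambda>(p, r). ssml_jump p c r) -` X"
  have jump: "(\<lambda>(p, r). ssml_jump p c r) \<in> borel_measurable borel"
    unfolding ssml_jump_def case_prod_beta
    by (intro borel_measurable_continuous_onI continuous_intros)
  have "Q \<in> sets (borel :: ((real^'m) \<times> (real^'m)) measure)"
    unfolding Q_def using measurable_sets[OF jump X] by simp
  also have "sets (borel :: ((real^'m) \<times> (real^'m)) measure) = sets (borel \<Otimes>\<^sub>M R)"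
    by (simp add: borel_prod[symmetric] sets_pair_measure_cong[OF refl sets_R])
  finally have "(\<lambda>p. emeasure R (Pair p -` Q)) \<in> borel_measurable borel"
    by (rule R.measurable_emeasure_Pair)
  moreover have "Pair p -` Q = {r. ssml_jump p c r \<in> X}" for p
    by (auto simp: Q_def)
  ultimately show ?thesis
    by simp
qed

lemma borel_measurable_emeasure_ssml_step:
  assumes X: "X \<in> sets borel"
  shows "(\<lambda>s. emeasure (ssml_step F nm q \<alpha> \<beta> R MH s) X) \<in> borel_measurable borel"
proof -
  have "(\<lambda>s :: (real^'m) \<times> nat. emeasure (ssml_step F nm q \<alpha> \<beta> R MH (fst s, c)) X)
      \<in> borel_measurable borel" for c
  proof -
    have fst: "(fst :: (real^'m) \<times> nat \<Rightarrow> real^'m) \<in> borel \<rightarrow>\<^sub>M borel"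
      by (intro borel_measurable_continuous_onI continuous_intros)
    have indicator_fst [measurable]:
      "(\<lambda>s::(real^'m) \<times> nat. indicator X (fst s, j) :: ennreal) \<in> borel_measurable borel"
      for j
    proof -
      have "(\<lambda>s::(real^'m) \<times> nat. (fst s, j)) \<in> borel \<rightarrow>\<^sub>M borel"
        by (intro borel_measurable_continuous_onI continuous_intros)
      then show ?thesis
        using X by (rule measurable_compose[OF _ borel_measurable_indicator])
    qed
    have [measurable]: "(\<lambda>s::(real^'m) \<times> nat. emeasure R {r. ssml_jump (fst s) c r \<in> X})
        \<in> borel_measurable borel"
      by (rule measurable_compose[OF fst borel_measurable_emeasure_ssml_jump[OF X]])
    have [measurable]: "(\<lambda>s::(real^'m) \<times> nat. rec_success nm q (F (fst s))) \<in> borel_measurable borel"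
      by (intro borel_measurable_rec_success measurable_compose[OF fst F_measurable])
    show ?thesis
    proof (cases "c = MH")
      case True
      show ?thesis
        unfolding emeasure_ssml_step[OF X] if_P[OF True] by (rule indicator_fst)
    next
      case False
      show ?thesis
        unfolding emeasure_ssml_step[OF X] if_not_P[OF False] by measurable
    qed
  qed
  then have "(\<lambda>s. emeasure (ssml_step F nm q \<alpha> \<beta> R MH (fst s, snd s)) X) \<in> borel_measurable borel"
    by (rule measurable_compose_countable'[OF _ measurable_snd_count_space]) auto
  then show ?thesis
    by simp
qed

lemma measurable_ssml_step: "ssml_step F nm q \<alpha> \<beta> R MH \<in> borel \<rightarrow>\<^sub>M prob_algebra borel"
proof (rule measurable_prob_algebraI)
  show "prob_space (ssml_step F nm q \<alpha> \<beta> R MH s)" for s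
    using ssml_step_prob_algebra[of s] by (simp add: space_prob_algebra)
  show "ssml_step F nm q \<alpha> \<beta> R MH \<in> borel \<rightarrow>\<^sub>M subprob_algebra borel"
    using ssml_step_prob_algebra borel_measurable_emeasure_ssml_step
    by (intro measurable_subprob_algebra)
       (auto simp: space_prob_algebra intro: prob_space_imp_subprob_space)
qed

lemma ssml_dist_prob_algebra: "ssml_dist F nm q \<alpha> \<beta> R MH p0 n \<in> space (prob_algebra borel)"
proof (induction n)
  case 0
  then show ?case
    by (simp add: space_prob_algebra prob_space_return)
next
  case (Suc n)
  then show ?case
    using prob_space_bind'[OF Suc measurable_ssml_step] sets_bind'[OF Suc measurable_ssml_step]
    by (simp add: space_prob_algebra)
qed

lemma prob_space_ssml_dist: "prob_space (ssml_dist F nm q \<alpha> \<beta> R MH p0 n)"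
  using ssml_dist_prob_algebra by (simp add: space_prob_algebra)

lemma sets_ssml_dist: "sets (ssml_dist F nm q \<alpha> \<beta> R MH p0 n) = sets borel"
  using ssml_dist_prob_algebra by (simp add: space_prob_algebra)

section \<open>Domination of the counter by the run length\<close>

lemma emeasure_ssml_step_counter_ge_le:
  assumes j: "1 \<le> j" "j \<le> MH" and rec: "\<And>x. rec_success nm q x \<le> pp"
  shows "emeasure (ssml_step F nm q \<alpha> \<beta> R MH s) {s. j \<le> snd s}
    \<le> ennreal ((1 - pp) * indicator {s. MH \<le> snd s} s + pp * indicator {s. j - 1 \<le> snd s} s)"
proof (cases s)
  case (Pair p c)
  have "{r. ssml_jump p c r \<in> {s. j \<le> snd s}} = {}"
    using j by (auto simp: ssml_jump_def)
  moreover have "rec_success nm q (F p) \<le> 1"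
    by (simp add: rec_success_def pmf_le_1)
  ultimately show ?thesis
    using emeasure_ssml_step[OF sets_Collect_snd_ge, of p c] j rec[of "F p"] Pair
    by (auto intro: ennreal_leI split: split_indicator)
qed

lemma prob_ssml_dist_Suc_counter_ge_le:
  assumes j: "1 \<le> j" "j \<le> MH" and rec: "\<And>x. rec_success nm q x \<le> pp"
    and pp: "0 \<le> pp" "pp \<le> 1"
  shows "measure (ssml_dist F nm q \<alpha> \<beta> R MH p0 (Suc n)) {s. j \<le> snd s}
    \<le> (1 - pp) * measure (ssml_dist F nm q \<alpha> \<beta> R MH p0 n) {s. MH \<le> snd s}
      + pp * measure (ssml_dist F nm q \<alpha> \<beta> R MH p0 n) {s. j - 1 \<le> snd s}"
proof -
  define P where "P = ssml_dist F nm q \<alpha> \<beta> R MH p0 n"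
  define G where "G s = (1 - pp) * indicator {s. MH \<le> snd s} s + pp * indicator {s. j - 1 \<le> snd s} s"
    for s :: "(real^'m) \<times> nat"
  interpret P: prob_space P
    unfolding P_def by (rule prob_space_ssml_dist)
  have events: "{s :: (real^'m) \<times> nat. i \<le> snd s} \<in> P.events" for i
    unfolding P_def sets_ssml_dist by (rule sets_Collect_snd_ge)
  have G_nonneg: "0 \<le> G s" for s
    using pp by (simp add: G_def)
  have G_integrable: "integrable P G"
    unfolding G_def using events
    by (intro Bochner_Integration.integrable_add integrable_mult_right integrable_real_indicator)
       (auto simp: less_top[symmetric])
  interpret P': prob_space "ssml_dist F nm q \<alpha> \<beta> R MH p0 (Suc n)"
    by (rule prob_space_ssml_dist)
  have "emeasure (ssml_dist F nm q \<alpha> \<beta> R MH p0 (Suc n)) {s. j \<le> snd s}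
      = (\<integral>\<^sup>+s. emeasure (ssml_step F nm q \<alpha> \<beta> R MH s) {s. j \<le> snd s} \<partial>P)"
    unfolding P_def ssml_dist.simps
    by (rule emeasure_bind_prob_algebra[OF ssml_dist_prob_algebra measurable_ssml_step sets_Collect_snd_ge])
  also have "\<dots> \<le> (\<integral>\<^sup>+s. ennreal (G s) \<partial>P)"
    unfolding G_def by (intro nn_integral_mono emeasure_ssml_step_counter_ge_le j rec)
  also have "\<dots> = ennreal (\<integral>s. G s \<partial>P)"
    by (rule nn_integral_eq_integral[OF G_integrable]) (simp add: G_nonneg)
  also have "(\<integral>s. G s \<partial>P) = (1 - pp) * P.prob {s. MH \<le> snd s} + pp * P.prob {s. j - 1 \<le> snd s}"
    unfolding G_def using events
    by (subst Bochner_Integration.integral_add) (auto simp: less_top[symmetric])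
  finally have "ennreal (measure (ssml_dist F nm q \<alpha> \<beta> R MH p0 (Suc n)) {s. j \<le> snd s})
      \<le> ennreal ((1 - pp) * P.prob {s. MH \<le> snd s} + pp * P.prob {s. j - 1 \<le> snd s})"
    by (simp only: P'.emeasure_eq_measure)
  then show ?thesis
    unfolding P_def by (rule ennreal_le_iff[THEN iffD1, rotated]) (use pp in simp)
qed

lemma prob_ssml_dist_counter_ge_le_run_dist:
  assumes rec: "\<And>x. rec_success nm q x \<le> pp" and pp: "0 \<le> pp" "pp \<le> 1" and "j \<le> MH"
  shows "measure (ssml_dist F nm q \<alpha> \<beta> R MH p0 n) {s. j \<le> snd s}
    \<le> measure_pmf.prob (run_dist MH pp n) {c. j \<le> c}"
  using pp
proof (rule tail_le_by_recursion
    [where G = "\<lambda>n j. measure (ssml_dist F nm q \<alpha> \<beta> R MH p0 n) {s. j \<le> snd s}"])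
  show "measure (ssml_dist F nm q \<alpha> \<beta> R MH p0 0) {s. j \<le> snd s}
      \<le> measure_pmf.prob (run_dist MH pp 0) {c. j \<le> c}" for j
    by (simp add: measure_return[OF sets_Collect_snd_ge] measure_pmf_single indicator_def)
  show "measure (ssml_dist F nm q \<alpha> \<beta> R MH p0 (Suc n)) {s. 0 \<le> snd s}
      \<le> measure_pmf.prob (run_dist MH pp (Suc n)) {c. 0 \<le> c}" for n
    using prob_space.prob_le_1[OF prob_space_ssml_dist, of p0 "Suc n"] by (simp del: ssml_dist.simps)
  show "measure (ssml_dist F nm q \<alpha> \<beta> R MH p0 (Suc n)) {s. j \<le> snd s}
      \<le> (1 - pp) * measure (ssml_dist F nm q \<alpha> \<beta> R MH p0 n) {s. MH \<le> snd s}
        + pp * measure (ssml_dist F nm q \<alpha> \<beta> R MH p0 n) {s. j - 1 \<le> snd s}"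
    if "1 \<le> j" "j \<le> MH" for n j
    using that rec pp by (rule prob_ssml_dist_Suc_counter_ge_le)
  show "measure_pmf.prob (run_dist MH pp (Suc n)) {c. j \<le> c}
      = (1 - pp) * measure_pmf.prob (run_dist MH pp n) {c. MH \<le> c}
        + pp * measure_pmf.prob (run_dist MH pp n) {c. j - 1 \<le> c}"
    if "1 \<le> j" "j \<le> MH" for n j
    by (rule prob_run_dist_Suc_ge[OF pp that])
qed (rule \<open>j \<le> MH\<close>)

lemma expected_wait_le_ssml_ET:
  assumes rec: "\<And>x. rec_success nm q x \<le> pp" and pp: "0 \<le> pp" "pp \<le> 1"
  shows "expected_wait MH pp \<le> ssml_ET F nm q \<alpha> \<beta> R MH p0"
  unfolding expected_wait_def ssml_ET_def
proof (rule suminf_le)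
  fix n
  interpret P: prob_space "ssml_dist F nm q \<alpha> \<beta> R MH p0 n"
    by (rule prob_space_ssml_dist)
  note sets_P = sets_ssml_dist[of p0 n]
  have "{s :: (real^'m) \<times> nat. snd s = MH} = {s. MH \<le> snd s} - {s. Suc MH \<le> snd s}"
    by auto
  then have halted: "{s :: (real^'m) \<times> nat. snd s = MH} \<in> P.events"
    using sets_Collect_snd_ge sets_P by auto
  have "P.prob {s. snd s = MH} \<le> P.prob {s. MH \<le> snd s}"
    using sets_Collect_snd_ge sets_P by (intro P.finite_measure_mono) auto
  also have "\<dots> \<le> measure_pmf.prob (run_dist MH pp n) {c. MH \<le> c}"
    by (rule prob_ssml_dist_counter_ge_le_run_dist[OF rec pp order.refl])
  also have "\<dots> = measure_pmf.prob (run_dist MH pp n) {MH}"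
    using AE_run_dist_le[of MH pp n] by (intro measure_pmf.finite_measure_eq_AE) auto
  finally have "P.prob {s. snd s = MH} \<le> measure_pmf.prob (run_dist MH pp n) {MH}" .
  then have "measure_pmf.prob (run_dist MH pp n) {c. c \<noteq> MH} \<le> P.prob {s. snd s \<noteq> MH}"
    using measure_pmf.prob_compl[of "{MH}" "run_dist MH pp n"] P.prob_compl[OF halted]
      sets_eq_imp_space_eq[OF sets_P]
    by (simp add: Collect_neg_eq Compl_eq_Diff_UNIV)
  then show "ennreal (measure_pmf.prob (run_dist MH pp n) {c. c \<noteq> MH})
      \<le> emeasure (ssml_dist F nm q \<alpha> \<beta> R MH p0 n) {s. snd s \<noteq> MH}"
    by (simp add: P.emeasure_eq_measure)
qed auto

end

theorem theorem4:
  fixes f \<psi> :: "complex^'d" and U :: "real^'m \<Rightarrow> complex^'d^'d"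
    and R :: "(real^'m) measure" and p0 :: "real^'m"
    and \<alpha> \<beta> q :: real and MH :: nat and nm :: noise_model
  assumes "CARD('d) \<ge> 2"
    and "unit_cvec f" and "unit_cvec \<psi>"
    and "\<forall>p. unitary_cmat (U p)"
    and "U \<in> borel_measurable borel"
    and "prob_space R" and "sets R = sets borel"
    and "AE r in R. norm r = 1"
    and "\<alpha> > 0" and "\<beta> > 0" and "MH \<ge> 1"
    and "(nm = BSC \<and> 0 < q \<and> q < 1/2) \<or> (nm = FN \<and> 0 < q \<and> q < 1)"
  shows "expected_wait MH (1 - q) \<le> ssml_ET (fidelity f U \<psi>) nm q \<alpha> \<beta> R MH p0
       \<and> expected_wait MH (1 - q) = ennreal ((1 - (1 - q) ^ MH) / (q * (1 - q) ^ MH))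
       \<and> ennreal ((exp (q * real MH) - 1) / q) \<le> expected_wait MH (1 - q)"
proof -
  \<comment> \<open>Only measurability of U and R enters: the bound holds for every fidelity landscape
    and every jump distribution.\<close>
  have q: "0 < q" "q < 1"
    using assms(12) by auto
  have "expected_wait MH (1 - q) \<le> ssml_ET (fidelity f U \<psi>) nm q \<alpha> \<beta> R MH p0"
    using q by (intro expected_wait_le_ssml_ET borel_measurable_fidelity assms(5-7)
        rec_success_le[OF assms(12)]) auto
  moreover have closed_form: "expected_wait MH (1 - q) = ennreal ((1 - (1 - q) ^ MH) / (q * (1 - q) ^ MH))"
    using expected_wait_eq[of "1 - q" MH] q by simp
  moreover have "ennreal ((exp (q * real MH) - 1) / q) \<le> expected_wait MH (1 - q)"
    unfolding closed_form by (intro ennreal_leI exp_mult_minus_one_div_le q)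
  ultimately show ?thesis
    by blast
qed

end
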